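(* Let $\bar X\in\mathbb{R}_{\ge0}^{m\times n}$, $u\in\mathbb{R}^m$, $v\in\mathbb{R}^n$, and let $(p,q)$ be the row and column sums of any realization $Y$ of the biproportional Poisson model with base matrix $\bar X$ and parameters $(u,v)$. Then IPF (with zero-marginal handling) on $(\bar X,p,q)$ converges, i.e. the scaled matrices converge to a matrix with row sums $p$ and column sums $q$.
   Context: Biproportional Poisson model: entries $Y_{ij}$ independent with $Y_{ij}\sim\mathrm{Poisson}(e^{u_i}\bar X_{ij}e^{-v_j})$ if $\bar X_{ij}>0$ and $Y_{ij}=0$ otherwise; $p_i=\sum_jY_{ij}$, $q_j=\sum_iY_{ij}$. IPF with zero-marginal handling on $(X,p,q)$ with $\sum_ip_i=\sum_jq_j$: start with $d^0=\mathbf 1_m$, $d^1=\mathbf 1_n$; alternately update rows (for each $i$: $d^0_i\leftarrow0$ if $p_i=0$, else $d^0_i\leftarrow p_i/\sum_jX_{ij}d^1_j$) and columns (for each $j$: $d^1_j\leftarrow0$ if $q_j=0$, else $d^1_j\leftarrow q_j/\sum_iX_{ij}d^0_i$); after each update the scaled matrix is $\mathrm{diag}(d^0)X\mathrm{diag}(d^1)$. *)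

theory Defs
  imports "HOL-Analysis.Analysis"
begin

text \<open>Matrices are functions nat => nat => real, relevant on indices i < m, j < n.\<close>

definition poisson_prob :: "real \<Rightarrow> nat \<Rightarrow> real" where
  "poisson_prob \<mu> k = exp (- \<mu>) * \<mu> ^ k / fact k"

text \<open>Y is a realization (an outcome of positive probability) of the biproportional
  Poisson model with base matrix X and parameters u, v.\<close>
definition biprop_realization ::
  "nat \<Rightarrow> nat \<Rightarrow> (nat \<Rightarrow> nat \<Rightarrow> real) \<Rightarrow> (nat \<Rightarrow> real) \<Rightarrow> (nat \<Rightarrow> real)
   \<Rightarrow> (nat \<Rightarrow> nat \<Rightarrow> nat) \<Rightarrow> bool" where
  "biprop_realization m n X u v Y \<longleftrightarrow>
     (\<forall>i<m. \<forall>j<n.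
        (if X i j > 0 then poisson_prob (exp (u i) * X i j * exp (- v j)) (Y i j) > 0
         else Y i j = 0))"

definition ipf_row_update ::
  "nat \<Rightarrow> (nat \<Rightarrow> nat \<Rightarrow> real) \<Rightarrow> (nat \<Rightarrow> real) \<Rightarrow> (nat \<Rightarrow> real) \<Rightarrow> nat \<Rightarrow> real" where
  "ipf_row_update n X p d1 = (\<lambda>i. if p i = 0 then 0 else p i / (\<Sum>j<n. X i j * d1 j))"

definition ipf_col_update ::
  "nat \<Rightarrow> (nat \<Rightarrow> nat \<Rightarrow> real) \<Rightarrow> (nat \<Rightarrow> real) \<Rightarrow> (nat \<Rightarrow> real) \<Rightarrow> nat \<Rightarrow> real" where
  "ipf_col_update m X q d0 = (\<lambda>j. if q j = 0 then 0 else q j / (\<Sum>i<m. X i j * d0 i))"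

text \<open>Scaling vectors (d0, d1) after k single updates: step 0 is the all-ones start;
  odd steps are row updates, even positive steps are column updates.\<close>
fun ipf_iter ::
  "nat \<Rightarrow> nat \<Rightarrow> (nat \<Rightarrow> nat \<Rightarrow> real) \<Rightarrow> (nat \<Rightarrow> real) \<Rightarrow> (nat \<Rightarrow> real) \<Rightarrow> nat
   \<Rightarrow> (nat \<Rightarrow> real) \<times> (nat \<Rightarrow> real)" where
  "ipf_iter m n X p q 0 = ((\<lambda>_. 1), (\<lambda>_. 1))"
| "ipf_iter m n X p q (Suc k) =
     (let (d0, d1) = ipf_iter m n X p q k in
      if even k then (ipf_row_update n X p d1, d1)
      else (d0, ipf_col_update m X q d0))"

definition ipf_scaled ::
  "nat \<Rightarrow> nat \<Rightarrow> (nat \<Rightarrow> nat \<Rightarrow> real) \<Rightarrow> (nat \<Rightarrow> real) \<Rightarrow> (nat \<Rightarrow> real) \<Rightarrow> nat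
   \<Rightarrow> nat \<Rightarrow> nat \<Rightarrow> real" where
  "ipf_scaled m n X p q k = (let (d0, d1) = ipf_iter m n X p q k in (\<lambda>i j. d0 i * X i j * d1 j))"

end

theory Submission
  imports Defs
begin

text \<open>IPF is coordinate ascent on the potential
  \<open>\<Psi>(d\<^sup>0, d\<^sup>1) = \<Sum>\<^sub>i p\<^sub>i ln d\<^sup>0\<^sub>i + \<Sum>\<^sub>j q\<^sub>j ln d\<^sup>1\<^sub>j\<close>.
  For every nonnegative matrix \<open>Z\<close> with margins \<open>(p, q)\<close> supported where \<open>X\<close> is positive
  (the realization \<open>Y\<close> is one) and every scaled matrix \<open>A\<close>, \<open>\<Psi> = KL(Z\<parallel>X) - KL(Z\<parallel>A)\<close>,
  so \<open>\<Psi>\<close> is bounded above. Each update raises \<open>\<Psi>\<close> by the relative entropy between the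
  prescribed and the current margins, which dominates their squared Hellinger distance.
  Hence \<open>\<Psi>\<close> converges, the margins of the iterates approach \<open>(p, q)\<close>, every limit point
  \<open>L\<close> of the iterates is again such a \<open>Z\<close>, and \<open>KL(L\<parallel>A\<^sub>k) = KL(L\<parallel>X) - \<Psi>\<^sub>k \<longrightarrow> 0\<close> forces
  \<open>A\<^sub>k \<longrightarrow> L\<close>.\<close>

lemma hellinger_le_mult_ln_div:
  fixes x y :: real
  assumes "0 \<le> x" "0 \<le> y" "0 < x \<Longrightarrow> 0 < y"
  shows "x - y + (sqrt x - sqrt y)\<^sup>2 \<le> x * ln (x / y)"
proof (cases "x = 0")
  case True
  then show ?thesis using assms by (simp add: power2_eq_square)
next
  case False
  then have "0 < x" "0 < y" using assms by auto
  define s t where "s = sqrt x" and "t = sqrt y"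
  have s: "0 < s" "x = s\<^sup>2" and t: "0 < t" "y = t\<^sup>2"
    using \<open>0 < x\<close> \<open>0 < y\<close> by (auto simp: s_def t_def)
  have "ln (x / y) = - 2 * ln (t / s)"
    using s t by (simp add: power_divide[symmetric] ln_realpow ln_div)
  moreover have "s\<^sup>2 * ln (t / s) \<le> s\<^sup>2 * (t / s - 1)"
    using s t by (intro mult_left_mono ln_le_minus_one) auto
  moreover have "s\<^sup>2 * (t / s - 1) = s * t - s\<^sup>2"
    using s by (simp add: field_simps power2_eq_square)
  ultimately show ?thesis
    unfolding s_def[symmetric] t_def[symmetric] using s t
    by (simp add: power2_eq_square algebra_simps)
qed

definition kl_div :: "'a set \<Rightarrow> ('a \<Rightarrow> real) \<Rightarrow> ('a \<Rightarrow> real) \<Rightarrow> real" where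
  "kl_div S x y = (\<Sum>s\<in>S. x s * ln (x s / y s))"

lemma hellinger_le_kl_div:
  assumes "\<And>s. s \<in> S \<Longrightarrow> 0 \<le> x s" "\<And>s. s \<in> S \<Longrightarrow> 0 \<le> y s"
    and "\<And>s. s \<in> S \<Longrightarrow> 0 < x s \<Longrightarrow> 0 < y s"
    and "sum x S = sum y S"
  shows "(\<Sum>s\<in>S. (sqrt (x s) - sqrt (y s))\<^sup>2) \<le> kl_div S x y"
proof -
  have "(\<Sum>s\<in>S. x s - y s + (sqrt (x s) - sqrt (y s))\<^sup>2) \<le> kl_div S x y"
    unfolding kl_div_def using assms(1-3) by (intro sum_mono hellinger_le_mult_ln_div) auto
  then show ?thesis using assms(4) by (simp add: sum.distrib sum_subtractf)
qed

lemma kl_div_nonneg: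
  assumes "\<And>s. s \<in> S \<Longrightarrow> 0 \<le> x s" "\<And>s. s \<in> S \<Longrightarrow> 0 \<le> y s"
    and "\<And>s. s \<in> S \<Longrightarrow> 0 < x s \<Longrightarrow> 0 < y s"
    and "sum x S = sum y S"
  shows "0 \<le> kl_div S x y"
  using hellinger_le_kl_div[OF assms] sum_nonneg[of S "\<lambda>s. (sqrt (x s) - sqrt (y s))\<^sup>2"]
  by simp

lemma kl_div_tendsto_zero:
  assumes "finite S" "\<And>s. s \<in> S \<Longrightarrow> 0 \<le> x s"
    and "\<And>s. s \<in> S \<Longrightarrow> (\<lambda>k. y k s) \<longlonglongrightarrow> x s"
  shows "(\<lambda>k. kl_div S x (y k)) \<longlonglongrightarrow> 0"
proof -
  have "(\<lambda>k. x s * ln (x s / y k s)) \<longlonglongrightarrow> 0" if "s \<in> S" for s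
  proof (cases "x s = 0")
    case False
    then have "0 < x s" using assms(2) that by fastforce
    then have "(\<lambda>k. x s * ln (x s / y k s)) \<longlonglongrightarrow> x s * ln (x s / x s)"
      using assms(3)[OF that] by (intro tendsto_intros) auto
    then show ?thesis using \<open>0 < x s\<close> by simp
  qed simp
  then have "(\<lambda>k. \<Sum>s\<in>S. x s * ln (x s / y k s)) \<longlonglongrightarrow> (\<Sum>s\<in>S. 0)"
    by (intro tendsto_sum) auto
  then show ?thesis by (simp add: kl_div_def)
qed

lemma tendsto_of_sqrt_dist_bound:
  fixes g h :: "nat \<Rightarrow> real"
  assumes "eventually (\<lambda>k. (sqrt (g k) - sqrt c)\<^sup>2 \<le> h k) sequentially" "h \<longlonglongrightarrow> 0"
    and "\<And>k. 0 \<le> g k" "0 \<le> c"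
  shows "g \<longlonglongrightarrow> c"
proof -
  have "(\<lambda>k. (sqrt (g k) - sqrt c)\<^sup>2) \<longlonglongrightarrow> 0"
    by (rule real_tendsto_sandwich[where f = "\<lambda>_. 0" and h = h]) (use assms(1,2) in auto)
  then have "(\<lambda>k. sqrt ((sqrt (g k) - sqrt c)\<^sup>2)) \<longlonglongrightarrow> sqrt 0"
    by (rule tendsto_real_sqrt)
  then have "(\<lambda>k. sqrt (g k) - sqrt c) \<longlonglongrightarrow> 0"
    by (simp add: tendsto_rabs_zero_iff)
  then have "(\<lambda>k. (sqrt (g k) - sqrt c) + sqrt c) \<longlonglongrightarrow> 0 + sqrt c"
    by (intro tendsto_add tendsto_const)
  then have "(\<lambda>k. (sqrt (g k))\<^sup>2) \<longlonglongrightarrow> (sqrt c)\<^sup>2"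
    by (intro tendsto_power) simp
  then show ?thesis using assms(3,4) by simp
qed

lemma bounded_family_convergent_subseq:
  fixes f :: "nat \<Rightarrow> 'a \<Rightarrow> real"
  assumes "finite S" and "\<And>k s. s \<in> S \<Longrightarrow> \<bar>f k s\<bar> \<le> B"
  shows "\<exists>r l. strict_mono r \<and> (\<forall>s\<in>S. (\<lambda>k. f (r k) s) \<longlonglongrightarrow> l s)"
proof -
  have "bounded ((\<lambda>x. x s) ` range f)" if "s \<in> S" for s
    using assms(2)[OF that] by (intro boundedI[of _ B]) auto
  then obtain l r where "strict_mono r"
      and "\<forall>\<epsilon>>0. \<forall>\<^sub>F k in sequentially. \<forall>s\<in>S. dist (f (r k) s) (l s) < \<epsilon>"
    using compact_lemma_general[where basis = S and f = f and proj = "\<lambda>x s. x s" and unproj = id]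
      assms(1)
    by auto
  then show ?thesis
    by (intro exI[of _ r] exI[of _ l]) (auto simp: tendsto_iff elim!: eventually_mono)
qed

definition feasible_matrix ::
  "nat \<Rightarrow> nat \<Rightarrow> (nat \<Rightarrow> nat \<Rightarrow> real) \<Rightarrow> (nat \<Rightarrow> real) \<Rightarrow> (nat \<Rightarrow> real)
   \<Rightarrow> (nat \<Rightarrow> nat \<Rightarrow> real) \<Rightarrow> bool" where
  "feasible_matrix m n X p q Z \<longleftrightarrow>
     (\<forall>i<m. \<forall>j<n. 0 \<le> Z i j \<and> (0 < Z i j \<longrightarrow> 0 < X i j))
     \<and> (\<forall>i<m. (\<Sum>j<n. Z i j) = p i) \<and> (\<forall>j<n. (\<Sum>i<m. Z i j) = q j)"

lemma feasible_matrix_pos: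
  assumes "feasible_matrix m n X p q Z" "i < m" "j < n" "0 < Z i j"
  shows "0 < X i j" "0 < p i" "0 < q j"
proof -
  have Z: "\<forall>i<m. \<forall>j<n. 0 \<le> Z i j \<and> (0 < Z i j \<longrightarrow> 0 < X i j)"
    and p: "p i = (\<Sum>j<n. Z i j)" and q: "q j = (\<Sum>i<m. Z i j)"
    using assms(1-3) by (auto simp: feasible_matrix_def)
  have "Z i j \<le> (\<Sum>j<n. Z i j)" "Z i j \<le> (\<Sum>i<m. Z i j)"
    using assms(2,3) Z by (auto intro!: member_le_sum)
  then show "0 < X i j" "0 < p i" "0 < q j"
    using Z p q assms(2-4) by auto
qed

lemma biprop_realization_feasible:
  assumes "biprop_realization m n X u v Y"
  shows "feasible_matrix m n X (\<lambda>i. real (\<Sum>j<n. Y i j)) (\<lambda>j. real (\<Sum>i<m. Y i j))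
           (\<lambda>i j. real (Y i j))"
proof -
  have "0 < X i j" if "i < m" "j < n" "0 < Y i j" for i j
  proof (rule ccontr)
    assume "\<not> 0 < X i j"
    then have "Y i j = 0" using assms that(1,2) unfolding biprop_realization_def by auto
    then show False using that(3) by simp
  qed
  then show ?thesis by (auto simp: feasible_matrix_def of_nat_sum)
qed

locale ipf =
  fixes m n :: nat and X :: "nat \<Rightarrow> nat \<Rightarrow> real" and p q :: "nat \<Rightarrow> real"
    and Z\<^sub>0 :: "nat \<Rightarrow> nat \<Rightarrow> real"
  assumes X_nonneg: "\<And>i j. i < m \<Longrightarrow> j < n \<Longrightarrow> 0 \<le> X i j"
    and feasible_Z\<^sub>0: "feasible_matrix m n X p q Z\<^sub>0"
begin

definition d0 :: "nat \<Rightarrow> nat \<Rightarrow> real" where "d0 k = fst (ipf_iter m n X p q k)"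
definition d1 :: "nat \<Rightarrow> nat \<Rightarrow> real" where "d1 k = snd (ipf_iter m n X p q k)"
definition A :: "nat \<Rightarrow> nat \<Rightarrow> nat \<Rightarrow> real" where "A k i j = d0 k i * X i j * d1 k j"
definition row_sum :: "nat \<Rightarrow> nat \<Rightarrow> real" where "row_sum k i = (\<Sum>j<n. A k i j)"
definition col_sum :: "nat \<Rightarrow> nat \<Rightarrow> real" where "col_sum k j = (\<Sum>i<m. A k i j)"
definition Psi :: "nat \<Rightarrow> real" where
  "Psi k = (\<Sum>i<m. p i * ln (d0 k i)) + (\<Sum>j<n. q j * ln (d1 k j))"

abbreviation cells :: "(nat \<times> nat) set" where "cells \<equiv> {..<m} \<times> {..<n}"

lemma ipf_scaled_eq_A: "ipf_scaled m n X p q k = A k"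
  by (simp add: ipf_scaled_def A_def d0_def d1_def split_def Let_def fun_eq_iff)

lemma d0_0 [simp]: "d0 0 = (\<lambda>_. 1)" and d1_0 [simp]: "d1 0 = (\<lambda>_. 1)"
  by (simp_all add: d0_def d1_def)

lemma d0_Suc: "d0 (Suc k) = (if even k then ipf_row_update n X p (d1 k) else d0 k)"
  and d1_Suc: "d1 (Suc k) = (if even k then d1 k else ipf_col_update m X q (d0 k))"
  by (simp_all add: d0_def d1_def split_def Let_def)

lemma p_nonneg: "i < m \<Longrightarrow> 0 \<le> p i" and q_nonneg: "j < n \<Longrightarrow> 0 \<le> q j"
  using feasible_Z\<^sub>0 unfolding feasible_matrix_def by (metis lessThan_iff sum_nonneg)+

lemma sum_q_eq_sum_p: "(\<Sum>j<n. q j) = (\<Sum>i<m. p i)"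
  using feasible_Z\<^sub>0 sum.swap[of Z\<^sub>0 "{..<n}" "{..<m}"] unfolding feasible_matrix_def by simp

lemma row_support:
  assumes "i < m" "0 < p i"
  obtains j where "j < n" "0 < X i j" "0 < q j"
proof -
  have "(\<Sum>j<n. Z\<^sub>0 i j) \<noteq> 0" using assms feasible_Z\<^sub>0 by (simp add: feasible_matrix_def)
  then obtain j where "j < n" "Z\<^sub>0 i j \<noteq> 0" by (meson lessThan_iff sum.neutral)
  then have "0 < Z\<^sub>0 i j" using assms(1) feasible_Z\<^sub>0 by (force simp: feasible_matrix_def)
  then show ?thesis using that feasible_matrix_pos[OF feasible_Z\<^sub>0 assms(1) \<open>j < n\<close>] \<open>j < n\<close> by blast
qed

lemma col_support:
  assumes "j < n" "0 < q j"
  obtains i where "i < m" "0 < X i j" "0 < p i"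
proof -
  have "(\<Sum>i<m. Z\<^sub>0 i j) \<noteq> 0" using assms feasible_Z\<^sub>0 by (simp add: feasible_matrix_def)
  then obtain i where "i < m" "Z\<^sub>0 i j \<noteq> 0" by (meson lessThan_iff sum.neutral)
  then have "0 < Z\<^sub>0 i j" using assms(1) feasible_Z\<^sub>0 by (force simp: feasible_matrix_def)
  then show ?thesis using that feasible_matrix_pos[OF feasible_Z\<^sub>0 \<open>i < m\<close> assms(1)] \<open>i < m\<close> by blast
qed

lemma row_denominator_pos:
  assumes "i < m" "0 < p i" "\<And>j. j < n \<Longrightarrow> 0 \<le> d j" "\<And>j. j < n \<Longrightarrow> 0 < q j \<Longrightarrow> 0 < d j"
  shows "0 < (\<Sum>j<n. X i j * d j)"
proof -
  obtain j where j: "j < n" "0 < X i j" "0 < q j" using row_support assms(1,2) .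
  then have "0 < X i j * d j" using assms(4) by simp
  also have "\<dots> \<le> (\<Sum>j<n. X i j * d j)"
    using j assms(1,3) X_nonneg by (intro member_le_sum) auto
  finally show ?thesis .
qed

lemma col_denominator_pos:
  assumes "j < n" "0 < q j" "\<And>i. i < m \<Longrightarrow> 0 \<le> d i" "\<And>i. i < m \<Longrightarrow> 0 < p i \<Longrightarrow> 0 < d i"
  shows "0 < (\<Sum>i<m. X i j * d i)"
proof -
  obtain i where i: "i < m" "0 < X i j" "0 < p i" using col_support assms(1,2) .
  then have "0 < X i j * d i" using assms(4) by simp
  also have "\<dots> \<le> (\<Sum>i<m. X i j * d i)"
    using i assms(1,3) X_nonneg by (intro member_le_sum) auto
  finally show ?thesis .
qed

text \<open>Zero margins are the only source of zero scaling factors, so no update divides by zero.\<close>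
lemma scalings_nonneg_pos:
  "(\<forall>i<m. 0 \<le> d0 k i \<and> (0 < p i \<longrightarrow> 0 < d0 k i))
   \<and> (\<forall>j<n. 0 \<le> d1 k j \<and> (0 < q j \<longrightarrow> 0 < d1 k j))"
proof (induction k)
  case 0
  then show ?case by simp
next
  case (Suc k)
  show ?case
  proof (cases "even k")
    case True
    have "0 \<le> d0 (Suc k) i \<and> (0 < p i \<longrightarrow> 0 < d0 (Suc k) i)" if "i < m" for i
      using row_denominator_pos[of i "d1 k"] Suc.IH that p_nonneg[of i]
      by (auto simp: d0_Suc True ipf_row_update_def)
    then show ?thesis using Suc.IH by (simp add: d1_Suc True)
  next
    case False
    have "0 \<le> d1 (Suc k) j \<and> (0 < q j \<longrightarrow> 0 < d1 (Suc k) j)" if "j < n" for j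
      using col_denominator_pos[of j "d0 k"] Suc.IH that q_nonneg[of j]
      by (auto simp: d1_Suc False ipf_col_update_def)
    then show ?thesis using Suc.IH by (simp add: d0_Suc False)
  qed
qed

lemma d0_nonneg: "i < m \<Longrightarrow> 0 \<le> d0 k i" and d0_pos: "i < m \<Longrightarrow> 0 < p i \<Longrightarrow> 0 < d0 k i"
  and d1_nonneg: "j < n \<Longrightarrow> 0 \<le> d1 k j" and d1_pos: "j < n \<Longrightarrow> 0 < q j \<Longrightarrow> 0 < d1 k j"
  using scalings_nonneg_pos[of k] by auto

lemma A_nonneg: "i < m \<Longrightarrow> j < n \<Longrightarrow> 0 \<le> A k i j"
  unfolding A_def using d0_nonneg d1_nonneg X_nonneg by simp

lemma row_sum_eq: "row_sum k i = d0 k i * (\<Sum>j<n. X i j * d1 k j)"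
  unfolding row_sum_def A_def by (simp add: sum_distrib_left mult.assoc)

lemma col_sum_eq: "col_sum k j = d1 k j * (\<Sum>i<m. X i j * d0 k i)"
  unfolding col_sum_def A_def by (simp add: sum_distrib_left algebra_simps)

lemma row_sum_nonneg: "i < m \<Longrightarrow> 0 \<le> row_sum k i"
  and col_sum_nonneg: "j < n \<Longrightarrow> 0 \<le> col_sum k j"
  unfolding row_sum_def col_sum_def using A_nonneg by (auto intro!: sum_nonneg)

lemma row_sum_pos: "i < m \<Longrightarrow> 0 < p i \<Longrightarrow> 0 < row_sum k i"
  unfolding row_sum_eq
  using d0_pos row_denominator_pos[of i "d1 k"] d1_nonneg d1_pos by simp

lemma col_sum_pos: "j < n \<Longrightarrow> 0 < q j \<Longrightarrow> 0 < col_sum k j"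
  unfolding col_sum_eq
  using d1_pos col_denominator_pos[of j "d0 k"] d0_nonneg d0_pos by simp

lemma d0_Suc_even: "even k \<Longrightarrow> i < m \<Longrightarrow> 0 < p i \<Longrightarrow> d0 (Suc k) i = d0 k i * (p i / row_sum k i)"
  using row_sum_pos[of i k] d0_pos[of i k] by (simp add: d0_Suc ipf_row_update_def row_sum_eq)

lemma d1_Suc_odd: "odd k \<Longrightarrow> j < n \<Longrightarrow> 0 < q j \<Longrightarrow> d1 (Suc k) j = d1 k j * (q j / col_sum k j)"
  using col_sum_pos[of j k] d1_pos[of j k] by (simp add: d1_Suc ipf_col_update_def col_sum_eq)

lemma row_sum_Suc_even: "even k \<Longrightarrow> i < m \<Longrightarrow> row_sum (Suc k) i = p i"
  using row_denominator_pos[of i "d1 k"] d1_nonneg d1_pos p_nonneg[of i]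
  by (cases "p i = 0") (auto simp: row_sum_eq d0_Suc d1_Suc ipf_row_update_def)

lemma col_sum_Suc_odd: "odd k \<Longrightarrow> j < n \<Longrightarrow> col_sum (Suc k) j = q j"
  using col_denominator_pos[of j "d0 k"] d0_nonneg d0_pos q_nonneg[of j]
  by (cases "q j = 0") (auto simp: col_sum_eq d0_Suc d1_Suc ipf_col_update_def)

lemma total_row_sum: "1 \<le> k \<Longrightarrow> (\<Sum>i<m. row_sum k i) = (\<Sum>i<m. p i)"
proof -
  assume "1 \<le> k"
  then obtain k' where k: "k = Suc k'" by (cases k) auto
  show ?thesis
  proof (cases "even k'")
    case True
    then show ?thesis unfolding k by (simp add: row_sum_Suc_even)
  next
    case False
    have "(\<Sum>i<m. row_sum k i) = (\<Sum>j<n. col_sum k j)"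
      unfolding row_sum_def col_sum_def by (rule sum.swap)
    then show ?thesis unfolding k using False by (simp add: col_sum_Suc_odd sum_q_eq_sum_p)
  qed
qed

lemma total_col_sum: "1 \<le> k \<Longrightarrow> (\<Sum>j<n. col_sum k j) = (\<Sum>j<n. q j)"
  using total_row_sum sum.swap[of "A k" "{..<n}" "{..<m}"] sum_q_eq_sum_p
  by (simp add: row_sum_def col_sum_def)

lemma Psi_Suc_even: "even k \<Longrightarrow> Psi (Suc k) - Psi k = kl_div {..<m} p (row_sum k)"
proof -
  assume k: "even k"
  have "p i * ln (d0 (Suc k) i) - p i * ln (d0 k i) = p i * ln (p i / row_sum k i)"
    if "i < m" for i
  proof (cases "p i = 0")
    case False
    then have "0 < p i" using p_nonneg[OF that] by simp
    then have "ln (d0 (Suc k) i) = ln (d0 k i) + ln (p i / row_sum k i)"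
      unfolding d0_Suc_even[OF k that \<open>0 < p i\<close>]
      using d0_pos[OF that] row_sum_pos[OF that] by (intro ln_mult_pos) auto
    then show ?thesis by (simp add: algebra_simps)
  qed simp
  then show ?thesis
    unfolding Psi_def kl_div_def using k by (simp add: d1_Suc sum_subtractf[symmetric])
qed

lemma Psi_Suc_odd: "odd k \<Longrightarrow> Psi (Suc k) - Psi k = kl_div {..<n} q (col_sum k)"
proof -
  assume k: "odd k"
  have "q j * ln (d1 (Suc k) j) - q j * ln (d1 k j) = q j * ln (q j / col_sum k j)"
    if "j < n" for j
  proof (cases "q j = 0")
    case False
    then have "0 < q j" using q_nonneg[OF that] by simp
    then have "ln (d1 (Suc k) j) = ln (d1 k j) + ln (q j / col_sum k j)"
      unfolding d1_Suc_odd[OF k that \<open>0 < q j\<close>]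
      using d1_pos[OF that] col_sum_pos[OF that] by (intro ln_mult_pos) auto
    then show ?thesis by (simp add: algebra_simps)
  qed simp
  then show ?thesis
    unfolding Psi_def kl_div_def using k by (simp add: d0_Suc sum_subtractf[symmetric])
qed

lemma Psi_mono: "1 \<le> k \<Longrightarrow> Psi k \<le> Psi (Suc k)"
proof (cases "even k")
  case True
  assume "1 \<le> k"
  then have "0 \<le> kl_div {..<m} p (row_sum k)"
    by (intro kl_div_nonneg) (auto simp: p_nonneg row_sum_nonneg row_sum_pos total_row_sum)
  then show ?thesis using Psi_Suc_even[OF True] by simp
next
  case False
  assume "1 \<le> k"
  then have "0 \<le> kl_div {..<n} q (col_sum k)"
    by (intro kl_div_nonneg) (auto simp: q_nonneg col_sum_nonneg col_sum_pos total_col_sum)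
  then show ?thesis using Psi_Suc_odd[OF False] by simp
qed

lemma row_hellinger_le_Psi_increment:
  assumes "even k" "1 \<le> k" "i < m"
  shows "(sqrt (row_sum k i) - sqrt (p i))\<^sup>2 \<le> Psi (Suc k) - Psi k"
proof -
  have "(sqrt (p i) - sqrt (row_sum k i))\<^sup>2 \<le> (\<Sum>i<m. (sqrt (p i) - sqrt (row_sum k i))\<^sup>2)"
    using assms(3) by (intro member_le_sum) auto
  also have "\<dots> \<le> kl_div {..<m} p (row_sum k)"
    using assms(2)
    by (intro hellinger_le_kl_div) (auto simp: p_nonneg row_sum_nonneg row_sum_pos total_row_sum)
  finally show ?thesis using Psi_Suc_even[OF assms(1)] by (simp add: power2_commute)
qed

lemma sum_cells: "(\<Sum>(i, j)\<in>cells. f i j) = (\<Sum>i<m. \<Sum>j<n. f i j)"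
  by (simp add: sum.cartesian_product)

lemma kl_div_cells:
  "kl_div cells (case_prod Z) (case_prod W) = (\<Sum>i<m. \<Sum>j<n. Z i j * ln (Z i j / W i j))"
  unfolding kl_div_def sum.cartesian_product by (simp add: split_beta)

lemma kl_div_A:
  assumes "feasible_matrix m n X p q Z"
  shows "kl_div cells (case_prod Z) (case_prod (A k))
           = kl_div cells (case_prod Z) (case_prod X) - Psi k"
proof -
  have "Z i j * ln (Z i j / A k i j)
          = Z i j * ln (Z i j / X i j) - Z i j * ln (d0 k i) - Z i j * ln (d1 k j)"
    if "i < m" "j < n" for i j
  proof (cases "Z i j = 0")
    case False
    then have "0 < Z i j" using assms that by (force simp: feasible_matrix_def)
    moreover have pos: "0 < X i j" "0 < d0 k i" "0 < d1 k j"
      using feasible_matrix_pos[OF assms that \<open>0 < Z i j\<close>] d0_pos[OF that(1)] d1_pos[OF that(2)]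
      by auto
    moreover have "ln (A k i j) = ln (d0 k i) + ln (X i j) + ln (d1 k j)"
      unfolding A_def using pos by (simp add: ln_mult)
    ultimately show ?thesis
      using pos by (simp add: A_def ln_div algebra_simps)
  qed simp
  then have "kl_div cells (case_prod Z) (case_prod (A k))
      = kl_div cells (case_prod Z) (case_prod X)
        - (\<Sum>i<m. \<Sum>j<n. Z i j * ln (d0 k i)) - (\<Sum>i<m. \<Sum>j<n. Z i j * ln (d1 k j))"
    unfolding kl_div_cells by (simp add: sum_subtractf)
  also have "(\<Sum>i<m. \<Sum>j<n. Z i j * ln (d0 k i)) = (\<Sum>i<m. p i * ln (d0 k i))"
    using assms by (simp add: feasible_matrix_def sum_distrib_right[symmetric])
  also have "(\<Sum>i<m. \<Sum>j<n. Z i j * ln (d1 k j)) = (\<Sum>j<n. q j * ln (d1 k j))"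
    using assms sum.swap[of "\<lambda>i j. Z i j * ln (d1 k j)" "{..<n}" "{..<m}"]
    by (simp add: feasible_matrix_def sum_distrib_right[symmetric])
  finally show ?thesis unfolding Psi_def by simp
qed

lemma hellinger_A_le:
  assumes "feasible_matrix m n X p q Z" "1 \<le> k"
  shows "(\<Sum>i<m. \<Sum>j<n. (sqrt (Z i j) - sqrt (A k i j))\<^sup>2)
           \<le> kl_div cells (case_prod Z) (case_prod X) - Psi k"
proof -
  have Z_nonneg: "0 \<le> Z i j" if "i < m" "j < n" for i j
    using assms(1) that by (simp add: feasible_matrix_def)
  have A_pos: "0 < A k i j" if "i < m" "j < n" "0 < Z i j" for i j
    using feasible_matrix_pos[OF assms(1) that] d0_pos[OF that(1)] d1_pos[OF that(2)]
    by (simp add: A_def)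
  have "sum (case_prod Z) cells = sum (case_prod (A k)) cells"
    using assms total_row_sum[OF assms(2)]
    unfolding sum_cells by (simp add: feasible_matrix_def row_sum_def)
  then have "(\<Sum>s\<in>cells. (sqrt (case_prod Z s) - sqrt (case_prod (A k) s))\<^sup>2)
               \<le> kl_div cells (case_prod Z) (case_prod (A k))"
    by (intro hellinger_le_kl_div) (auto simp: Z_nonneg A_nonneg A_pos)
  then show ?thesis
    using sum_cells[of "\<lambda>i j. (sqrt (Z i j) - sqrt (A k i j))\<^sup>2"] kl_div_A[OF assms(1)]
    by (simp add: split_beta)
qed

lemma Psi_le_kl_div: "1 \<le> k \<Longrightarrow> Psi k \<le> kl_div cells (case_prod Z\<^sub>0) (case_prod X)"
  using hellinger_A_le[OF feasible_Z\<^sub>0]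
    sum_nonneg[of "{..<m}" "\<lambda>i. \<Sum>j<n. (sqrt (Z\<^sub>0 i j) - sqrt (A k i j))\<^sup>2"]
  by (fastforce intro: sum_nonneg)

lemma Psi_tendsto: obtains P where "Psi \<longlonglongrightarrow> P"
proof -
  have "incseq (\<lambda>k. Psi (Suc k))" by (rule incseq_SucI) (simp add: Psi_mono)
  moreover have "\<forall>k. Psi (Suc k) \<le> kl_div cells (case_prod Z\<^sub>0) (case_prod X)"
    by (simp add: Psi_le_kl_div)
  ultimately obtain P where "(\<lambda>k. Psi (Suc k)) \<longlonglongrightarrow> P" by (rule incseq_convergent)
  then show ?thesis using that filterlim_sequentially_Suc by blast
qed

lemma A_le_sum_p: "i < m \<Longrightarrow> j < n \<Longrightarrow> 1 \<le> k \<Longrightarrow> A k i j \<le> (\<Sum>i<m. p i)"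
proof -
  assume ij: "i < m" "j < n" and k: "1 \<le> k"
  have "A k i j \<le> row_sum k i"
    unfolding row_sum_def using ij A_nonneg by (intro member_le_sum) auto
  also have "\<dots> \<le> (\<Sum>i<m. row_sum k i)"
    using ij row_sum_nonneg by (intro member_le_sum) auto
  finally show ?thesis using total_row_sum[OF k] by simp
qed

lemma row_sum_even_tendsto: "i < m \<Longrightarrow> (\<lambda>l. row_sum (2 * l + 2) i) \<longlonglongrightarrow> p i"
proof -
  assume i: "i < m"
  obtain P where "Psi \<longlonglongrightarrow> P" by (rule Psi_tendsto)
  then have "(\<lambda>k. Psi (Suc k) - Psi k) \<longlonglongrightarrow> P - P"
    by (intro tendsto_diff LIMSEQ_Suc)
  moreover have "strict_mono (\<lambda>l :: nat. 2 * l + 2)" by (rule strict_monoI) simp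
  ultimately have increment: "(\<lambda>l. Psi (Suc (2 * l + 2)) - Psi (2 * l + 2)) \<longlonglongrightarrow> 0"
    using LIMSEQ_subseq_LIMSEQ by (fastforce simp: o_def)
  have "(sqrt (row_sum (2 * l + 2) i) - sqrt (p i))\<^sup>2
          \<le> Psi (Suc (2 * l + 2)) - Psi (2 * l + 2)" for l
    using i by (intro row_hellinger_le_Psi_increment) auto
  then have "\<forall>\<^sub>F l in sequentially.
      (sqrt (row_sum (2 * l + 2) i) - sqrt (p i))\<^sup>2 \<le> Psi (Suc (2 * l + 2)) - Psi (2 * l + 2)"
    by (intro always_eventually allI)
  then show ?thesis
    by (rule tendsto_of_sqrt_dist_bound[OF _ increment]) (simp_all add: i row_sum_nonneg p_nonneg)
qed

lemma exists_limit_point: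
  obtains r L where "strict_mono r" "\<And>i j. i < m \<Longrightarrow> j < n \<Longrightarrow> (\<lambda>l. A (2 * r l + 2) i j) \<longlonglongrightarrow> L i j"
proof -
  have "\<bar>case_prod (A (2 * l + 2)) s\<bar> \<le> (\<Sum>i<m. p i)" if "s \<in> cells" for l s
    using that A_nonneg A_le_sum_p by (auto simp: split_beta)
  then obtain r L where r: "strict_mono r"
      and conv: "\<forall>s\<in>cells. (\<lambda>l. case_prod (A (2 * r l + 2)) s) \<longlonglongrightarrow> L s"
    using bounded_family_convergent_subseq[of cells "\<lambda>l. case_prod (A (2 * l + 2))"] by blast
  show ?thesis
  proof (rule that[of r "curry L"])
    show "strict_mono r" by (fact r)
    fix i j assume "i < m" "j < n"
    then show "(\<lambda>l. A (2 * r l + 2) i j) \<longlonglongrightarrow> curry L i j" using conv by auto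
  qed
qed

lemma limit_point_feasible:
  assumes r: "strict_mono r" and L: "\<And>i j. i < m \<Longrightarrow> j < n \<Longrightarrow> (\<lambda>l. A (2 * r l + 2) i j) \<longlonglongrightarrow> L i j"
  shows "feasible_matrix m n X p q L"
proof -
  have nonneg: "0 \<le> L i j" if "i < m" "j < n" for i j
    using L[OF that] A_nonneg[OF that] by (intro LIMSEQ_le_const) auto
  have support: "0 < X i j" if ij: "i < m" "j < n" and "0 < L i j" for i j
  proof -
    obtain l where "0 < A (2 * r l + 2) i j"
      using order_tendstoD(1)[OF L[OF ij] \<open>0 < L i j\<close>]
      unfolding eventually_sequentially by blast
    then show ?thesis using X_nonneg[OF ij] by (auto simp: A_def order.order_iff_strict)
  qed
  have rows: "(\<Sum>j<n. L i j) = p i" if i: "i < m" for i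
  proof (rule LIMSEQ_unique)
    show "(\<lambda>l. row_sum (2 * r l + 2) i) \<longlonglongrightarrow> (\<Sum>j<n. L i j)"
      unfolding row_sum_def using L i by (intro tendsto_sum) auto
    show "(\<lambda>l. row_sum (2 * r l + 2) i) \<longlonglongrightarrow> p i"
      using LIMSEQ_subseq_LIMSEQ[OF row_sum_even_tendsto[OF i] r] by (simp add: o_def)
  qed
  have cols: "(\<Sum>i<m. L i j) = q j" if j: "j < n" for j
  proof (rule LIMSEQ_unique)
    show "(\<lambda>l. col_sum (2 * r l + 2) j) \<longlonglongrightarrow> (\<Sum>i<m. L i j)"
      unfolding col_sum_def using L j by (intro tendsto_sum) auto
    have "col_sum (Suc (2 * r l + 1)) j = q j" for l
      using j by (intro col_sum_Suc_odd) auto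
    then show "(\<lambda>l. col_sum (2 * r l + 2) j) \<longlonglongrightarrow> q j" by simp
  qed
  show ?thesis unfolding feasible_matrix_def using nonneg support rows cols by auto
qed

theorem A_tendsto_feasible:
  obtains L where "feasible_matrix m n X p q L"
    and "\<And>i j. i < m \<Longrightarrow> j < n \<Longrightarrow> (\<lambda>k. A k i j) \<longlonglongrightarrow> L i j"
proof -
  obtain P where P: "Psi \<longlonglongrightarrow> P" by (rule Psi_tendsto)
  obtain r L where r: "strict_mono r"
    and L: "\<And>i j. i < m \<Longrightarrow> j < n \<Longrightarrow> (\<lambda>l. A (2 * r l + 2) i j) \<longlonglongrightarrow> L i j"
    using exists_limit_point by blast
  have feasible_L: "feasible_matrix m n X p q L" using limit_point_feasible[OF r L] .
  define KL where "KL = kl_div cells (case_prod L) (case_prod X)"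
  text \<open>Along the subsequence \<open>KL(L\<parallel>A) \<longrightarrow> 0\<close>, which identifies the limit of \<open>\<Psi>\<close>.\<close>
  have "(\<lambda>l. kl_div cells (case_prod L) (case_prod (A (2 * r l + 2)))) \<longlonglongrightarrow> 0"
    using feasible_L L by (intro kl_div_tendsto_zero) (auto simp: feasible_matrix_def)
  moreover have "strict_mono (\<lambda>l. 2 * r l + 2)"
    using r by (simp add: strict_mono_def)
  then have "(\<lambda>l. Psi (2 * r l + 2)) \<longlonglongrightarrow> P"
    using LIMSEQ_subseq_LIMSEQ[OF P] by (simp add: o_def)
  then have "(\<lambda>l. kl_div cells (case_prod L) (case_prod (A (2 * r l + 2)))) \<longlonglongrightarrow> KL - P"
    unfolding kl_div_A[OF feasible_L] KL_def by (intro tendsto_diff tendsto_const)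
  ultimately have "KL - P = 0" by (rule LIMSEQ_unique[rotated])
  then have gap: "(\<lambda>k. KL - Psi k) \<longlonglongrightarrow> 0"
    using tendsto_diff[OF tendsto_const P, of KL] by simp
  have "(\<lambda>k. A k i j) \<longlonglongrightarrow> L i j" if ij: "i < m" "j < n" for i j
  proof (rule tendsto_of_sqrt_dist_bound[OF _ gap])
    have "(sqrt (A k i j) - sqrt (L i j))\<^sup>2 \<le> KL - Psi k" if "1 \<le> k" for k
    proof -
      have "(sqrt (L i j) - sqrt (A k i j))\<^sup>2 \<le> (\<Sum>j<n. (sqrt (L i j) - sqrt (A k i j))\<^sup>2)"
        using ij by (intro member_le_sum) auto
      also have "\<dots> \<le> (\<Sum>i<m. \<Sum>j<n. (sqrt (L i j) - sqrt (A k i j))\<^sup>2)"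
        using ij by (intro member_le_sum sum_nonneg) auto
      also have "\<dots> \<le> KL - Psi k" unfolding KL_def by (rule hellinger_A_le[OF feasible_L that])
      finally show ?thesis by (simp add: power2_commute)
    qed
    then show "\<forall>\<^sub>F k in sequentially. (sqrt (A k i j) - sqrt (L i j))\<^sup>2 \<le> KL - Psi k"
      unfolding eventually_sequentially by blast
    show "0 \<le> A k i j" for k using A_nonneg ij .
    show "0 \<le> L i j" using feasible_L ij by (simp add: feasible_matrix_def)
  qed
  then show ?thesis using that feasible_L by blast
qed

end


theorem mainTheorem7:
  fixes m n :: nat
    and X :: "nat \<Rightarrow> nat \<Rightarrow> real"
    and u v :: "nat \<Rightarrow> real"
    and Y :: "nat \<Rightarrow> nat \<Rightarrow> nat"
    and p q :: "nat \<Rightarrow> real"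
  assumes X_nonneg: "\<forall>i<m. \<forall>j<n. X i j \<ge> 0"
    and realization: "biprop_realization m n X u v Y"
    and p_def: "\<forall>i. p i = real (\<Sum>j<n. Y i j)"
    and q_def: "\<forall>j. q j = real (\<Sum>i<m. Y i j)"
  shows "\<exists>L :: nat \<Rightarrow> nat \<Rightarrow> real.
           (\<forall>i<m. \<forall>j<n. (\<lambda>k. ipf_scaled m n X p q k i j) \<longlonglongrightarrow> L i j)
         \<and> (\<forall>i<m. (\<Sum>j<n. L i j) = p i)
         \<and> (\<forall>j<n. (\<Sum>i<m. L i j) = q j)"
proof -
  have "p = (\<lambda>i. real (\<Sum>j<n. Y i j))" "q = (\<lambda>j. real (\<Sum>i<m. Y i j))"
    using p_def q_def by auto
  then have "feasible_matrix m n X p q (\<lambda>i j. real (Y i j))"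
    using biprop_realization_feasible[OF realization] by simp
  then interpret ipf m n X p q "\<lambda>i j. real (Y i j)"
    using X_nonneg by unfold_locales auto
  obtain L where "feasible_matrix m n X p q L" "\<And>i j. i < m \<Longrightarrow> j < n \<Longrightarrow> (\<lambda>k. A k i j) \<longlonglongrightarrow> L i j"
    using A_tendsto_feasible by blast
  then show ?thesis unfolding ipf_scaled_eq_A feasible_matrix_def by blast
qed

end
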